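(* Let $a<b$, $k>0$, $\lambda\in(0,\pi/2]$, $f\in C^3([a,b])$, and put $\mu_1=\sup_{t\in[a,b]}|f''(t)|$, $\mu_2=\sup_{t\in[a,b]}|f'''(t)|$. Let $\epsilon\in J_n$ for some $n\ge0$, and let $y_\epsilon$ be the solution of $\epsilon y''+ky=f(t)$ on $[a,b]$, $y'(a)=y'(b)=0$. Then for every $t_0\in[a,b]$, $$\Big|y_\epsilon(t_0)-\frac{f(t_0)}{k}\Big|\le\frac{1}{k\sin\lambda}\sqrt{\frac{\epsilon}{k}}\Big\{|f'(a)|+|f'(b)|+\sqrt{\frac{\epsilon}{k}}\big(|f''(a)|+\mu_2(b-a)\big)\Big\}+\frac1k\sqrt{\frac{\epsilon}{k}}\Big\{|f'(a)|+\sqrt{\frac{\epsilon}{k}}\big(\mu_1+|f''(a)|+\mu_2(b-a)\big)\Big\}.$$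
   Context: For a fixed constant $\lambda\in(0,\pi/2]$ and $n=0,1,2,\dots$ define the closed intervals $$J_n=\left[\,k\left(\frac{b-a}{(n+1)\pi-\lambda}\right)^2,\ k\left(\frac{b-a}{n\pi+\lambda}\right)^2\,\right].$$ Note that $\epsilon\in J_n$ iff $\sqrt{k/\epsilon}\,(b-a)\in[n\pi+\lambda,(n+1)\pi-\lambda]$. *)

theory Defs
  imports "HOL-Analysis.Analysis"
begin

definition J :: "real \<Rightarrow> real \<Rightarrow> real \<Rightarrow> real \<Rightarrow> nat \<Rightarrow> real set" where
  "J k a b lam n = {k * ((b - a) / ((real n + 1) * pi - lam))\<^sup>2 .. k * ((b - a) / (real n * pi + lam))\<^sup>2}"

end

theory Submission
  imports Defs
begin

text \<open>Put \<open>w = sqrt (k / \<epsilon>)\<close> and \<open>u = y - f / k\<close>, so that \<open>u'' + w\<^sup>2 u = - f'' / k\<close>.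
  For every phase \<open>\<theta>\<close> the quantity
  \<open>u' sin (\<theta> - w s) + w u cos (\<theta> - w s) + f'' cos (\<theta> - w s) / (k w)\<close>
  has derivative \<open>f''' cos (\<theta> - w s) / (k w)\<close>, hence varies by at most \<open>\<mu>\<^sub>2 (b - a) / (k w)\<close>
  on \<open>[a, b]\<close>. Comparing its values at \<open>a\<close> and \<open>b\<close> for \<open>\<theta> = w b + \<pi> / 2\<close> and using
  \<open>y'(a) = y'(b) = 0\<close> bounds \<open>w |u(a)| |sin (w (b - a))|\<close>; the condition \<open>\<epsilon> \<in> J\<^sub>n\<close> says
  \<open>w (b - a) \<in> [n \<pi> + \<lambda>, (n + 1) \<pi> - \<lambda>]\<close>, where \<open>|sin| \<ge> sin \<lambda>\<close>. The phase \<open>\<theta> = w t\<^sub>0\<close>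
  then carries the bound from \<open>a\<close> to \<open>t\<^sub>0\<close>.\<close>

lemma sin_le_abs_sin_between:
  fixes lam x :: real and n :: nat
  assumes "0 < lam" "lam \<le> pi / 2" "real n * pi + lam \<le> x" "x \<le> (real n + 1) * pi - lam"
  shows "sin lam \<le> \<bar>sin x\<bar>"
proof -
  define z where "z = x - real n * pi"
  have z: "lam \<le> z" "z \<le> pi - lam" using assms by (auto simp: z_def algebra_simps)
  have "\<bar>sin x\<bar> = \<bar>sin z\<bar>"
    by (simp add: z_def sin_diff abs_mult)
  moreover have "sin lam \<le> sin z"
  proof (cases "z \<le> pi / 2")
    case True
    then show ?thesis using z assms by (intro sin_monotone_2pi_le) auto
  next
    case False
    then have "sin lam \<le> sin (pi - z)" using z assms by (intro sin_monotone_2pi_le) auto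
    then show ?thesis by simp
  qed
  moreover have "0 \<le> sin lam" using assms by (intro sin_ge_zero) auto
  ultimately show ?thesis by linarith
qed

lemma mem_J_bounds:
  fixes k a b lam \<epsilon> :: real and n :: nat
  assumes "a < b" "k > 0" "0 < lam" "lam < pi" "\<epsilon> \<in> J k a b lam n"
  shows "\<epsilon> > 0" and "real n * pi + lam \<le> sqrt (k / \<epsilon>) * (b - a)"
    and "sqrt (k / \<epsilon>) * (b - a) \<le> (real n + 1) * pi - lam"
proof -
  define L where "L = b - a"
  have "0 \<le> real n * pi" "(real n + 1) * pi = real n * pi + pi" by (simp_all add: distrib_right)
  then have d1: "real n * pi + lam > 0" and d2: "(real n + 1) * pi - lam > 0"
    using assms(3,4) by linarith+
  have e1: "k * L\<^sup>2 / ((real n + 1) * pi - lam)\<^sup>2 \<le> \<epsilon>"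
    and e2: "\<epsilon> \<le> k * L\<^sup>2 / (real n * pi + lam)\<^sup>2"
    using assms(5) by (auto simp: J_def L_def power_divide)
  have L: "L > 0" using assms(1) by (simp add: L_def)
  show eps: "\<epsilon> > 0"
    using e1 assms(2) d2 L by (smt (verit) divide_pos_pos mult_pos_pos zero_less_power)
  have scaled: "sqrt (k / \<epsilon>) * (b - a) = sqrt (k * L\<^sup>2 / \<epsilon>)"
    using L by (simp add: L_def real_sqrt_mult real_sqrt_divide)
  have "(real n * pi + lam)\<^sup>2 \<le> k * L\<^sup>2 / \<epsilon>"
    using e2 d1 eps by (simp add: pos_le_divide_eq mult.commute)
  then show "real n * pi + lam \<le> sqrt (k / \<epsilon>) * (b - a)"
    unfolding scaled by (rule real_le_rsqrt)
  have "k * L\<^sup>2 / \<epsilon> \<le> ((real n + 1) * pi - lam)\<^sup>2"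
    using e1 d2 eps by (simp add: pos_divide_le_eq mult.commute)
  then show "sqrt (k / \<epsilon>) * (b - a) \<le> (real n + 1) * pi - lam"
    unfolding scaled using d2 by (intro real_le_lsqrt) auto
qed

lemma abs_le_SUP_abs_on_Icc:
  fixes g :: "real \<Rightarrow> real"
  assumes "continuous_on {a..b} g" "t \<in> {a..b}"
  shows "\<bar>g t\<bar> \<le> (SUP s\<in>{a..b}. \<bar>g s\<bar>)"
proof -
  have "bdd_above ((\<lambda>s. \<bar>g s\<bar>) ` {a..b})"
    by (intro bounded_imp_bdd_above compact_imp_bounded compact_continuous_image
        continuous_on_rabs assms(1) compact_Icc)
  then show ?thesis using assms(2) by (rule cSUP_upper2) simp
qed

text \<open>Along solutions of \<open>u'' + w\<^sup>2 u + g = 0\<close> the first two terms alone have derivative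
  \<open>- g s sin (\<theta> - w s)\<close>; the third term integrates this by parts, leaving only \<open>g'\<close>.\<close>

definition oscillator_invariant ::
    "(real \<Rightarrow> real) \<Rightarrow> (real \<Rightarrow> real) \<Rightarrow> (real \<Rightarrow> real) \<Rightarrow> real \<Rightarrow> real \<Rightarrow> real \<Rightarrow> real" where
  "oscillator_invariant u u' g w \<theta> s =
     u' s * sin (\<theta> - w * s) + w * u s * cos (\<theta> - w * s) + g s * cos (\<theta> - w * s) / w"

lemma has_real_derivative_oscillator_invariant:
  assumes "(u has_real_derivative u' s) (at s within S)"
    and "(u' has_real_derivative u'' s) (at s within S)"
    and "(g has_real_derivative g' s) (at s within S)"
    and "u'' s + w\<^sup>2 * u s + g s = 0" "w \<noteq> 0"
  shows "(oscillator_invariant u u' g w \<theta> has_real_derivative g' s * cos (\<theta> - w * s) / w)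
           (at s within S)"
proof -
  have u'': "u'' s = - w\<^sup>2 * u s - g s" using assms(4) by simp
  show ?thesis
    unfolding oscillator_invariant_def [abs_def]
    by (auto intro!: derivative_eq_intros assms(1-3) simp: u'' assms(5) field_simps power2_eq_square)
qed

lemma oscillator_invariant_lipschitz:
  fixes u u' u'' g g' :: "real \<Rightarrow> real"
  assumes "\<And>s. s \<in> {a..b} \<Longrightarrow> (u has_real_derivative u' s) (at s within {a..b})"
    and "\<And>s. s \<in> {a..b} \<Longrightarrow> (u' has_real_derivative u'' s) (at s within {a..b})"
    and "\<And>s. s \<in> {a..b} \<Longrightarrow> (g has_real_derivative g' s) (at s within {a..b})"
    and "\<And>s. s \<in> {a..b} \<Longrightarrow> u'' s + w\<^sup>2 * u s + g s = 0"
    and "\<And>s. s \<in> {a..b} \<Longrightarrow> \<bar>g' s\<bar> \<le> M"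
    and "w > 0" "s \<in> {a..b}" "t \<in> {a..b}"
  shows "\<bar>oscillator_invariant u u' g w \<theta> t - oscillator_invariant u u' g w \<theta> s\<bar> \<le> M / w * \<bar>t - s\<bar>"
proof -
  have bound: "norm (g' r * cos (\<theta> - w * r) / w) \<le> M / w" if "r \<in> {a..b}" for r
  proof -
    have "\<bar>g' r\<bar> * \<bar>cos (\<theta> - w * r)\<bar> \<le> \<bar>g' r\<bar>"
      by (simp add: mult_left_le)
    then have "\<bar>g' r * cos (\<theta> - w * r)\<bar> \<le> M"
      using assms(5)[OF that] by (simp add: abs_mult)
    then show ?thesis using assms(6) by (simp add: divide_right_mono)
  qed
  have deriv: "(oscillator_invariant u u' g w \<theta> has_real_derivative g' r * cos (\<theta> - w * r) / w)
      (at r within {a..b})" if "r \<in> {a..b}" for r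
    using has_real_derivative_oscillator_invariant[where u''=u'' and g'=g', OF assms(1-4)[OF that]] assms(6) by simp
  show ?thesis
    using field_differentiable_bound[OF convex_real_interval(5) deriv bound assms(8,7)] by simp
qed

lemma oscillator_left_end_bound:
  fixes u u' u'' g g' :: "real \<Rightarrow> real"
  assumes "\<And>s. s \<in> {a..b} \<Longrightarrow> (u has_real_derivative u' s) (at s within {a..b})"
    and "\<And>s. s \<in> {a..b} \<Longrightarrow> (u' has_real_derivative u'' s) (at s within {a..b})"
    and "\<And>s. s \<in> {a..b} \<Longrightarrow> (g has_real_derivative g' s) (at s within {a..b})"
    and "\<And>s. s \<in> {a..b} \<Longrightarrow> u'' s + w\<^sup>2 * u s + g s = 0"
    and "\<And>s. s \<in> {a..b} \<Longrightarrow> \<bar>g' s\<bar> \<le> M"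
    and "w > 0" "a \<le> b"
  shows "w * \<bar>u a\<bar> * \<bar>sin (w * (b - a))\<bar> \<le> \<bar>u' a\<bar> + \<bar>u' b\<bar> + \<bar>g a\<bar> / w + M / w * (b - a)"
proof -
  define \<theta> where "\<theta> = w * b + pi / 2"
  define G where "G = oscillator_invariant u u' g w \<theta>"
  define c where "c = w * (b - a)"
  have "\<theta> - w * a = c + pi / 2" by (simp add: \<theta>_def c_def algebra_simps)
  then have Ga: "G a = u' a * cos c - w * u a * sin c - g a * sin c / w"
    by (simp add: G_def oscillator_invariant_def sin_add cos_add)
  have Gb: "G b = u' b" by (simp add: G_def oscillator_invariant_def \<theta>_def)
  have tri: "\<bar>p - q - r - v\<bar> \<le> \<bar>p\<bar> + \<bar>q\<bar> + \<bar>r\<bar> + \<bar>v\<bar>" for p q r v :: real by arith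
  have "w * \<bar>u a\<bar> * \<bar>sin c\<bar> = \<bar>u' a * cos c - g a * sin c / w - (G a - G b) - G b\<bar>"
    using assms(6) by (simp add: Ga abs_mult)
  also have "\<dots> \<le> \<bar>u' a * cos c\<bar> + \<bar>g a * sin c / w\<bar> + \<bar>G a - G b\<bar> + \<bar>G b\<bar>"
    by (rule tri)
  also have "\<dots> \<le> \<bar>u' a\<bar> + \<bar>g a\<bar> / w + M / w * (b - a) + \<bar>u' b\<bar>"
  proof (intro add_mono)
    show "\<bar>G a - G b\<bar> \<le> M / w * (b - a)"
      using oscillator_invariant_lipschitz[OF assms(1-6), of b a] assms(7) by (simp add: G_def)
  qed (use assms(6) in \<open>simp_all add: Gb abs_mult mult_left_le divide_right_mono\<close>)
  finally show ?thesis by (simp add: c_def)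
qed

lemma oscillator_interior_bound:
  fixes u u' u'' g g' :: "real \<Rightarrow> real"
  assumes "\<And>s. s \<in> {a..b} \<Longrightarrow> (u has_real_derivative u' s) (at s within {a..b})"
    and "\<And>s. s \<in> {a..b} \<Longrightarrow> (u' has_real_derivative u'' s) (at s within {a..b})"
    and "\<And>s. s \<in> {a..b} \<Longrightarrow> (g has_real_derivative g' s) (at s within {a..b})"
    and "\<And>s. s \<in> {a..b} \<Longrightarrow> u'' s + w\<^sup>2 * u s + g s = 0"
    and "\<And>s. s \<in> {a..b} \<Longrightarrow> \<bar>g' s\<bar> \<le> M"
    and "w > 0" "t \<in> {a..b}"
  shows "w * \<bar>u t\<bar> \<le> w * \<bar>u a\<bar> + \<bar>u' a\<bar> + \<bar>g a\<bar> / w + \<bar>g t\<bar> / w + M / w * (t - a)"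
proof -
  define G where "G = oscillator_invariant u u' g w (w * t)"
  define c where "c = w * (t - a)"
  have "w * t - w * a = c" by (simp add: c_def algebra_simps)
  then have Ga: "G a = u' a * sin c + w * u a * cos c + g a * cos c / w"
    and Gt: "G t = w * u t + g t / w"
    by (simp_all add: G_def oscillator_invariant_def)
  have tri: "\<bar>p + q + r + v - z\<bar> \<le> \<bar>p\<bar> + \<bar>q\<bar> + \<bar>r\<bar> + \<bar>v\<bar> + \<bar>z\<bar>"
    for p q r v z :: real by arith
  have "w * \<bar>u t\<bar> = \<bar>(G t - G a) + u' a * sin c + w * u a * cos c + g a * cos c / w - g t / w\<bar>"
    using assms(6) by (simp add: Ga Gt abs_mult)
  also have "\<dots> \<le> \<bar>G t - G a\<bar> + \<bar>u' a * sin c\<bar> + \<bar>w * u a * cos c\<bar> + \<bar>g a * cos c / w\<bar> + \<bar>g t / w\<bar>"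
    by (rule tri)
  also have "\<dots> \<le> M / w * (t - a) + \<bar>u' a\<bar> + w * \<bar>u a\<bar> + \<bar>g a\<bar> / w + \<bar>g t\<bar> / w"
  proof (intro add_mono)
    show "\<bar>G t - G a\<bar> \<le> M / w * (t - a)"
      using oscillator_invariant_lipschitz[OF assms(1-6), of a t] assms(7) by (simp add: G_def)
  qed (use assms(6) in \<open>simp_all add: abs_mult mult_left_le divide_right_mono\<close>)
  finally show ?thesis by simp
qed

lemma neumann_problem_deviation_bound:
  fixes f f1 f2 f3 y y1 y2 :: "real \<Rightarrow> real"
  assumes ab: "a < b" and k: "k > 0" and w: "w > 0"
    and f1: "\<And>t. t \<in> {a..b} \<Longrightarrow> (f has_real_derivative f1 t) (at t within {a..b})"
    and f2: "\<And>t. t \<in> {a..b} \<Longrightarrow> (f1 has_real_derivative f2 t) (at t within {a..b})"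
    and f3: "\<And>t. t \<in> {a..b} \<Longrightarrow> (f2 has_real_derivative f3 t) (at t within {a..b})"
    and y1: "\<And>t. t \<in> {a..b} \<Longrightarrow> (y has_real_derivative y1 t) (at t within {a..b})"
    and y2: "\<And>t. t \<in> {a..b} \<Longrightarrow> (y1 has_real_derivative y2 t) (at t within {a..b})"
    and ode: "\<And>t. t \<in> {a..b} \<Longrightarrow> y2 t = w\<^sup>2 * (f t / k - y t)"
    and bc: "y1 a = 0" "y1 b = 0"
    and M1: "\<And>t. t \<in> {a..b} \<Longrightarrow> \<bar>f2 t\<bar> \<le> M1"
    and M2: "\<And>t. t \<in> {a..b} \<Longrightarrow> \<bar>f3 t\<bar> \<le> M2"
    and \<sigma>: "0 < \<sigma>" "\<sigma> \<le> \<bar>sin (w * (b - a))\<bar>"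
    and t0: "t0 \<in> {a..b}"
  shows "\<bar>y t0 - f t0 / k\<bar> \<le>
      1 / (k * \<sigma>) * (1 / w) * (\<bar>f1 a\<bar> + \<bar>f1 b\<bar> + 1 / w * (\<bar>f2 a\<bar> + M2 * (b - a)))
    + 1 / k * (1 / w) * (\<bar>f1 a\<bar> + 1 / w * (M1 + \<bar>f2 a\<bar> + M2 * (b - a)))"
proof -
  define u where "u s = y s - f s / k" for s
  define u' where "u' s = y1 s - f1 s / k" for s
  define u'' where "u'' s = y2 s - f2 s / k" for s
  have du: "(u has_real_derivative u' s) (at s within {a..b})"
    and du': "(u' has_real_derivative u'' s) (at s within {a..b})"
    and dg: "((\<lambda>s. f2 s / k) has_real_derivative f3 s / k) (at s within {a..b})"
    if "s \<in> {a..b}" for s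
    unfolding u_def [abs_def] u'_def [abs_def] u''_def
    using k by (auto intro!: derivative_eq_intros f1 f2 f3 y1 y2 that)
  have osc: "u'' s + w\<^sup>2 * u s + f2 s / k = 0" if "s \<in> {a..b}" for s
    using ode[OF that] by (simp add: u_def u''_def algebra_simps)
  have g': "\<bar>f3 s / k\<bar> \<le> M2 / k" if "s \<in> {a..b}" for s
    using M2[OF that] k by (simp add: divide_right_mono)
  define A where "A = \<bar>f1 a\<bar> + \<bar>f1 b\<bar> + 1 / w * (\<bar>f2 a\<bar> + M2 * (b - a))"
  define B where "B = \<bar>f1 a\<bar> + 1 / w * (M1 + \<bar>f2 a\<bar> + M2 * (b - a))"
  have "w * \<sigma> * \<bar>u a\<bar> \<le> w * \<bar>u a\<bar> * \<bar>sin (w * (b - a))\<bar>"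
    using mult_right_mono[OF mult_left_mono[OF \<sigma>(2), of w], of "\<bar>u a\<bar>"] w by (simp add: mult_ac)
  also have "\<dots> \<le> \<bar>u' a\<bar> + \<bar>u' b\<bar> + \<bar>f2 a / k\<bar> / w + M2 / k / w * (b - a)"
    using ab by (intro oscillator_left_end_bound[OF du du' dg osc g' w]) auto
  also have "\<dots> = A / k"
    using k w by (simp add: A_def u'_def bc abs_divide field_simps)
  finally have "\<bar>u a\<bar> * (w * \<sigma>) \<le> A / k" by (simp add: mult_ac)
  then have ua: "\<bar>u a\<bar> \<le> A / k / (w * \<sigma>)"
    using w \<sigma> by (subst pos_le_divide_eq) auto
  have "w * \<bar>u t0\<bar> \<le> w * \<bar>u a\<bar> + \<bar>u' a\<bar> + \<bar>f2 a / k\<bar> / w + \<bar>f2 t0 / k\<bar> / w + M2 / k / w * (t0 - a)"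
    by (rule oscillator_interior_bound[OF du du' dg osc g' w t0])
  also have "\<dots> = w * \<bar>u a\<bar> + \<bar>f1 a\<bar> / k + \<bar>f2 a\<bar> / (k * w) + (\<bar>f2 t0\<bar> + M2 * (t0 - a)) / (k * w)"
    using k w by (simp add: u'_def bc abs_divide field_simps)
  also have "\<dots> \<le> w * \<bar>u a\<bar> + \<bar>f1 a\<bar> / k + \<bar>f2 a\<bar> / (k * w) + (M1 + M2 * (b - a)) / (k * w)"
  proof -
    have "M2 * (t0 - a) \<le> M2 * (b - a)"
      using M2[of a] t0 by (intro mult_left_mono) auto
    then have "\<bar>f2 t0\<bar> + M2 * (t0 - a) \<le> M1 + M2 * (b - a)"
      using M1[OF t0] by linarith
    then show ?thesis using k w by (simp add: divide_right_mono)
  qed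
  also have "\<dots> = w * \<bar>u a\<bar> + B / k"
    using k w by (simp add: B_def field_simps)
  finally have "\<bar>u t0\<bar> \<le> \<bar>u a\<bar> + B / k / w"
    using k w by (simp add: field_simps)
  with ua show ?thesis
    by (simp add: u_def A_def B_def mult_ac)
qed

theorem mainTheorem3:
  fixes a b k lam \<epsilon> :: real and n :: nat
    and f f1 f2 f3 y y1 y2 :: "real \<Rightarrow> real"
  assumes ab: "a < b" and kpos: "k > 0"
    and lam: "0 < lam" "lam \<le> pi / 2"
    and f1: "\<And>t. t \<in> {a..b} \<Longrightarrow> (f has_real_derivative f1 t) (at t within {a..b})"
    and f2: "\<And>t. t \<in> {a..b} \<Longrightarrow> (f1 has_real_derivative f2 t) (at t within {a..b})"
    and f3: "\<And>t. t \<in> {a..b} \<Longrightarrow> (f2 has_real_derivative f3 t) (at t within {a..b})"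
    and f3c: "continuous_on {a..b} f3"
    and eps: "\<epsilon> \<in> J k a b lam n"
    and y1: "\<And>t. t \<in> {a..b} \<Longrightarrow> (y has_real_derivative y1 t) (at t within {a..b})"
    and y2: "\<And>t. t \<in> {a..b} \<Longrightarrow> (y1 has_real_derivative y2 t) (at t within {a..b})"
    and ode: "\<And>t. t \<in> {a..b} \<Longrightarrow> \<epsilon> * y2 t + k * y t = f t"
    and bc: "y1 a = 0" "y1 b = 0"
    and t0: "t0 \<in> {a..b}"
  shows "\<bar>y t0 - f t0 / k\<bar> \<le>
      1 / (k * sin lam) * sqrt (\<epsilon> / k) *
        (\<bar>f1 a\<bar> + \<bar>f1 b\<bar> + sqrt (\<epsilon> / k) * (\<bar>f2 a\<bar> + (SUP t\<in>{a..b}. \<bar>f3 t\<bar>) * (b - a)))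
    + 1 / k * sqrt (\<epsilon> / k) *
        (\<bar>f1 a\<bar> + sqrt (\<epsilon> / k) * ((SUP t\<in>{a..b}. \<bar>f2 t\<bar>) + \<bar>f2 a\<bar> + (SUP t\<in>{a..b}. \<bar>f3 t\<bar>) * (b - a)))"
proof -
  have "lam < pi" using lam(2) pi_gt_zero by linarith
  note J = mem_J_bounds[OF ab kpos lam(1) this eps]
  define w where "w = sqrt (k / \<epsilon>)"
  have w: "w > 0" using kpos J(1) by (simp add: w_def)
  have sqrt_eps: "sqrt (\<epsilon> / k) = 1 / w"
    using kpos J(1) by (simp add: w_def real_sqrt_divide)
  have ode_w: "y2 t = w\<^sup>2 * (f t / k - y t)" if "t \<in> {a..b}" for t
    using kpos J(1) by (simp add: w_def field_simps flip: ode[OF that])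
  have sin_pos: "0 < sin lam"
    using lam by (intro sin_gt_zero) auto
  have sin_le: "sin lam \<le> \<bar>sin (w * (b - a))\<bar>"
    using sin_le_abs_sin_between[OF lam J(2,3)] by (simp add: w_def)
  have M1: "\<bar>f2 t\<bar> \<le> (SUP s\<in>{a..b}. \<bar>f2 s\<bar>)" if "t \<in> {a..b}" for t
    using abs_le_SUP_abs_on_Icc[OF DERIV_continuous_on[OF f3] that] .
  have M2: "\<bar>f3 t\<bar> \<le> (SUP s\<in>{a..b}. \<bar>f3 s\<bar>)" if "t \<in> {a..b}" for t
    using abs_le_SUP_abs_on_Icc[OF f3c that] .
  show ?thesis
    using neumann_problem_deviation_bound[OF ab kpos w f1 f2 f3 y1 y2 ode_w bc M1 M2 sin_pos sin_le t0]
    by (simp add: sqrt_eps)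
qed

end
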